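(* Let $n\ge1$, $\alpha\in[0,\pi/2]$, and let $p(a,b|x,y)$, $a,x\in\{0,1\}$, $y\in\{0,\dots,n-1\}$, $b\in\{0,1,\varnothing\}$, admit an LHS model for Alice's trusted measurements $\mathrm A^\alpha_{a|x}$, i.e. $p(a,b|x,y)=\sum_\lambda \mathrm{tr}(\mathrm A^\alpha_{a|x}\rho_\lambda)\,p(b|y,\lambda)$ for a finite family of positive semidefinite $2\times2$ matrices $\rho_\lambda$ with $\sum_\lambda\mathrm{tr}\rho_\lambda=1$ and conditional probabilities $p(b|y,\lambda)$. Then $$n\sin\left(\tfrac{\pi}{2n}\right)\mathcal W^\alpha_n\ \le\ \sqrt2\,\sin\left(\tfrac{\pi}{2}\mathcal T_n\right)\gamma(s_\alpha).$$
   Context: $Z,X$ denote the Pauli matrices on $\mathbb C^2$. For $\alpha\in[0,\pi/2]$ and $x\in\{0,1\}$: $A^\alpha_x:=\cos\alpha\,\frac{Z+X}{\sqrt2}+(-1)^x\sin\alpha\,\frac{Z-X}{\sqrt2}$ and $\mathrm A^\alpha_{a|x}:=\frac12(I+(-1)^aA^\alpha_x)$. $s_\alpha:=2(\cos\alpha+\sin\alpha)$, $\gamma(s):=\frac{s+\sqrt{8-s^2}}{4}$. With $\theta_y=y\pi/n$: $\mathcal W^\alpha_n:=\frac1n\sum_{y=0}^{n-1}\sum_{a,b\in\{0,1\}}(-1)^{a+b}\big(\cos\theta_y\,p(a,b|0,y)+\sin\theta_y\,p(a,b|1,y)\big)$ and $\mathcal T_n:=\frac1n\sum_{y=0}^{n-1}\sum_{b\in\{0,1\}}p(b|y)$,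 where $p(b|y)=\sum_a p(a,b|x,y)$. *)

theory Defs
  imports "HOL-Analysis.Analysis"
begin

text \<open>2x2 complex matrices are represented as complex^2^2; indices of type 2 are 0 and 1.\<close>

definition pauliZ :: "complex^2^2" where
  "pauliZ = (\<chi> i j. if i = j then (if i = 0 then 1 else -1) else 0)"

definition pauliX :: "complex^2^2" where
  "pauliX = (\<chi> i j. if i = j then 0 else 1)"

definition obsA :: "real \<Rightarrow> nat \<Rightarrow> complex^2^2" where
  "obsA \<alpha> x = (cos \<alpha> / sqrt 2) *\<^sub>R (pauliZ + pauliX)
              + ((-1) ^ x * sin \<alpha> / sqrt 2) *\<^sub>R (pauliZ - pauliX)"

definition effA :: "real \<Rightarrow> nat \<Rightarrow> nat \<Rightarrow> complex^2^2" where
  "effA \<alpha> a x = (1/2) *\<^sub>R (mat 1 + ((-1) ^ a) *\<^sub>R obsA \<alpha> x)"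

definition psd2 :: "complex^2^2 \<Rightarrow> bool" where
  "psd2 \<rho> \<longleftrightarrow> (\<forall>v :: complex^2.
      let q = (\<Sum>i\<in>UNIV. \<Sum>j\<in>UNIV. cnj (v$i) * \<rho>$i$j * v$j) in Im q = 0 \<and> Re q \<ge> 0)"

definition s_alpha :: "real \<Rightarrow> real" where
  "s_alpha \<alpha> = 2 * (cos \<alpha> + sin \<alpha>)"

definition gamma_fn :: "real \<Rightarrow> real" where
  "gamma_fn s = (s + sqrt (8 - s^2)) / 4"

text \<open>Behaviour p a b x y = p(a,b|x,y); outcome b = 2 encodes the no-click outcome \<emptyset>.\<close>

definition Wn :: "nat \<Rightarrow> (nat \<Rightarrow> nat \<Rightarrow> nat \<Rightarrow> nat \<Rightarrow> real) \<Rightarrow> real" where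
  "Wn n p = (1 / real n) * (\<Sum>y<n. \<Sum>a\<in>{0,1::nat}. \<Sum>b\<in>{0,1::nat}.
      (-1) ^ (a + b) * (cos (real y * pi / real n) * p a b 0 y
                       + sin (real y * pi / real n) * p a b 1 y))"

text \<open>Bob's marginal p(b|y) = sum_a p(a,b|x,y), taken at x = 0 (x-independent under an LHS model).\<close>
definition Tn :: "nat \<Rightarrow> (nat \<Rightarrow> nat \<Rightarrow> nat \<Rightarrow> nat \<Rightarrow> real) \<Rightarrow> real" where
  "Tn n p = (1 / real n) * (\<Sum>y<n. \<Sum>b\<in>{0,1::nat}. \<Sum>a\<in>{0,1::nat}. p a b 0 y)"

end

theory Submission
  imports Defs
begin

(* For one hidden state with Bloch data A = tr(A_0 rho), B = tr(A_1 rho), its contribution to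
   n W_n is a sum  sum_y E_y (A cos theta_y + B sin theta_y)  with |E_y| <= t_y <= 1, i.e. a signed
   sample of a cosine at the n angles y pi / n of a half circle.  Moving the negative parts of E to
   the antipodal points gives a sample with weights in [0, 1] on the full grid of 2n angles, and
   such a sample of total mass K is at most sqrt(A^2 + B^2) sin(pi K / 2n) / sin(pi / 2n): the best
   one can do is to pile the mass up around the maximum of the cosine.  Positivity of rho bounds
   sqrt(A^2 + B^2) by sqrt 2 max(cos alpha, sin alpha) tr rho = sqrt 2 gamma(s_alpha) tr rho, and
   concavity of sin on [0, pi] averages the single-state bounds into the stated one. *)

section \<open>Sums of a cosine sampled on a grid of the circle\<close>

definition tilt :: "real \<Rightarrow> real \<Rightarrow> real" where
  "tilt a t = sin t - t * cos a"

definition clip :: "real \<Rightarrow> real \<Rightarrow> real" where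
  "clip a t = max (-a) (min a t)"

lemma has_real_derivative_tilt: "(tilt a has_real_derivative cos t - cos a) (at t)"
  unfolding tilt_def[abs_def] by (auto intro!: derivative_eq_intros)

lemma tilt_mono:
  assumes "a \<le> pi" "-a \<le> x" "x \<le> y" "y \<le> a"
  shows "tilt a x \<le> tilt a y"
proof (rule DERIV_nonneg_imp_nondecreasing[OF \<open>x \<le> y\<close>])
  fix z assume "x \<le> z" "z \<le> y"
  then have "cos a \<le> cos \<bar>z\<bar>"
    using assms by (intro cos_monotone_0_pi_le) auto
  then show "\<exists>d. (tilt a has_real_derivative d) (at z) \<and> 0 \<le> d"
    using has_real_derivative_tilt by fastforce
qed

lemma cos_le_cos_outside:
  assumes "0 \<le> a" "a \<le> \<bar>z\<bar>" "\<bar>z\<bar> \<le> 2 * pi - a"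
  shows "cos z \<le> cos a"
proof (cases "\<bar>z\<bar> \<le> pi")
  case True
  then have "cos \<bar>z\<bar> \<le> cos a"
    using assms by (intro cos_monotone_0_pi_le) auto
  then show ?thesis by (simp add: abs_if split: if_splits)
next
  case False
  then have "cos (2 * pi - \<bar>z\<bar>) \<le> cos a"
    using assms by (intro cos_monotone_0_pi_le) auto
  then show ?thesis by (simp add: abs_if split: if_splits)
qed

lemma tilt_antimono:
  assumes "0 \<le> a" "x \<le> y" and "a \<le> x \<and> y \<le> 2 * pi - a \<or> a - 2 * pi \<le> x \<and> y \<le> -a"
  shows "tilt a y \<le> tilt a x"
proof (rule DERIV_nonpos_imp_nonincreasing[OF \<open>x \<le> y\<close>])
  fix z assume "x \<le> z" "z \<le> y"
  then have "cos z \<le> cos a"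
    using assms by (intro cos_le_cos_outside) auto
  then show "\<exists>d. (tilt a has_real_derivative d) (at z) \<and> d \<le> 0"
    using has_real_derivative_tilt by fastforce
qed

lemma tilt_clip_mono:
  assumes "0 \<le> a" "a \<le> pi" "x \<le> y"
  shows "tilt a (clip a x) \<le> tilt a (clip a y)"
  using assms by (intro tilt_mono) (auto simp: clip_def)

lemma tilt_minus_tilt_clip_antimono:
  assumes "0 \<le> a" "a \<le> pi" "a - 2 * pi \<le> x" "x \<le> y" "y \<le> 2 * pi - a"
  shows "tilt a y - tilt a (clip a y) \<le> tilt a x - tilt a (clip a x)"
proof -
  consider "y \<le> -a \<or> a \<le> x" | "-a < y" "x < a" by linarith
  then show ?thesis
  proof cases
    case 1
    then show ?thesis
      using assms tilt_antimono[of a x y] by (auto simp: clip_def)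
  next
    case 2
    have "tilt a y - tilt a (clip a y) \<le> 0"
      using 2 assms tilt_antimono[of a a y] by (cases "y \<le> a") (auto simp: clip_def)
    moreover have "0 \<le> tilt a x - tilt a (clip a x)"
      using 2 assms tilt_antimono[of a x "-a"] by (cases "-a \<le> x") (auto simp: clip_def)
    ultimately show ?thesis by linarith
  qed
qed

lemma tilt_clip_bounds:
  assumes "0 \<le> a" "a \<le> pi"
  shows "tilt a (-a) \<le> tilt a (clip a t)" "tilt a (clip a t) \<le> tilt a a"
  using assms by (auto intro!: tilt_mono simp: clip_def)

(* sin t = tilt a (clip a t) + (tilt a t - tilt a (clip a t)) + t cos a, and on [a - 2 pi, 2 pi - a]
   the first summand is nondecreasing and the second nonincreasing: a weight in [0, 1] can be dropped
   from the increment of the first and the increment of the second can be dropped altogether. *)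
lemma weighted_sin_increment_le:
  assumes "0 \<le> a" "a \<le> pi" "a - 2 * pi \<le> x" "x \<le> y" "y \<le> 2 * pi - a"
    and "0 \<le> w" "w \<le> 1"
  shows "w * (sin y - sin x)
    \<le> tilt a (clip a y) - tilt a (clip a x) + w * (y - x) * cos a"
proof -
  have P: "0 \<le> tilt a (clip a y) - tilt a (clip a x)"
    using tilt_clip_mono[OF assms(1,2,4)] by simp
  have G: "tilt a y - tilt a (clip a y) - (tilt a x - tilt a (clip a x)) \<le> 0"
    using tilt_minus_tilt_clip_antimono[OF assms(1-5)] by simp
  have "w * (sin y - sin x)
      = w * (tilt a (clip a y) - tilt a (clip a x))
        + w * (tilt a y - tilt a (clip a y) - (tilt a x - tilt a (clip a x))) + w * (y - x) * cos a"
    by (simp add: tilt_def algebra_simps)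
  also have "\<dots> \<le> (tilt a (clip a y) - tilt a (clip a x)) + 0 + w * (y - x) * cos a"
    using P G assms(6,7) by (intro add_mono mult_left_le_one_le mult_nonneg_nonpos) auto
  finally show ?thesis by simp
qed

lemma grid_cos_sum_le_centred:
  fixes w :: "nat \<Rightarrow> real" and N :: nat
  assumes "0 < N" "\<And>i. i < N \<Longrightarrow> 0 \<le> w i \<and> w i \<le> 1" "(\<Sum>i<N. w i) \<le> k" "k \<le> N / 2"
    and "pi * (k - 1) / N \<le> \<beta>" "\<beta> \<le> 2 * pi - pi * (k + 1) / N"
  shows "sin (pi / N) * (\<Sum>i<N. w i * cos (2 * pi * i / N - \<beta>)) \<le> sin (pi * k / N)"
proof -
  define h where "h = 2 * pi / N"
  define a where "a = pi * k / N"
  \<comment> \<open>the midpoints between grid points, so that each cosine term is a difference of sines\<close>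
  define x where "x i = i * h - \<beta> - h / 2" for i :: nat
  define P where "P t = tilt a (clip a t)" for t
  have "0 \<le> k"
    using assms(2,3) sum_nonneg[of "{..<N}" w] by fastforce
  then have a: "0 \<le> a" "a \<le> pi / 2"
    using assms(1,4) by (auto simp: a_def field_simps)
  have h: "0 < h" "h * N = 2 * pi"
    using assms(1) by (auto simp: h_def a_def)
  have x_lo: "a - 2 * pi \<le> x i" for i
  proof -
    have "a - 2 * pi \<le> x 0"
      using assms(6) by (simp add: x_def h_def a_def distrib_left add_divide_distrib)
    also have "x 0 \<le> x i" using h(1) by (simp add: x_def)
    finally show ?thesis .
  qed
  have x_hi: "x i \<le> 2 * pi - a" if "i \<le> N" for i
  proof -
    have "x i \<le> x N" using that h(1) by (simp add: x_def mult_right_mono)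
    also have "x N \<le> 2 * pi - a"
      using assms(5) h(2) by (simp add: x_def h_def a_def right_diff_distrib diff_divide_distrib)
    finally show ?thesis .
  qed
  have increment:
    "2 * (sin (pi / N) * (w i * cos (2 * pi * i / N - \<beta>))) = w i * (sin (x (Suc i)) - sin (x i))" for i
  proof -
    have "(x (Suc i) - x i) / 2 = pi / N" "(x (Suc i) + x i) / 2 = 2 * pi * i / N - \<beta>"
      using assms(1) by (simp_all add: x_def h_def field_simps)
    then show ?thesis by (simp only: sin_diff_sin) simp
  qed
  then have "2 * (sin (pi / N) * (\<Sum>i<N. w i * cos (2 * pi * i / N - \<beta>)))
      = (\<Sum>i<N. w i * (sin (x (Suc i)) - sin (x i)))"
    by (simp only: sum_distrib_left increment)
  also have "\<dots> \<le> (\<Sum>i<N. P (x (Suc i)) - P (x i) + w i * h * cos a)"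
  proof (rule sum_mono)
    fix i assume "i \<in> {..<N}"
    then have "i < N" by simp
    have "x (Suc i) - x i = h" by (simp add: x_def algebra_simps)
    moreover have "w i * (sin (x (Suc i)) - sin (x i))
        \<le> P (x (Suc i)) - P (x i) + w i * (x (Suc i) - x i) * cos a"
      unfolding P_def using a x_lo x_hi[of "Suc i"] assms(2)[OF \<open>i < N\<close>] h(1) \<open>i < N\<close>
      by (intro weighted_sin_increment_le) (auto simp: x_def)
    ultimately show "w i * (sin (x (Suc i)) - sin (x i)) \<le> P (x (Suc i)) - P (x i) + w i * h * cos a"
      by simp
  qed
  also have "\<dots> = P (x N) - P (x 0) + h * cos a * (\<Sum>i<N. w i)"
    by (simp add: sum.distrib sum_lessThan_telescope[of "\<lambda>i. P (x i)"] sum_distrib_left mult_ac)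
  also have "\<dots> \<le> (tilt a a - tilt a (-a)) + h * cos a * k"
    using tilt_clip_bounds[of a] a assms(3) h(1) cos_ge_zero[of a]
    by (intro add_mono diff_mono mult_left_mono) (auto simp: P_def)
  also have "\<dots> = 2 * sin (pi * k / N)"
    using assms(1) by (simp add: tilt_def a_def h_def field_simps)
  finally show ?thesis by simp
qed

lemma sum_lessThan_rotate:
  fixes g :: "nat \<Rightarrow> 'a::comm_monoid_add" and m :: int
  assumes "0 < N"
  shows "(\<Sum>i<N. g (nat ((int i + m) mod int N))) = (\<Sum>i<N. g i)"
  using assms
  by (intro sum.reindex_bij_witness[where j = "\<lambda>i. nat ((int i + m) mod int N)"
        and i = "\<lambda>j. nat ((int j - m) mod int N)"])
     (auto simp: nat_less_iff mod_add_left_eq mod_diff_left_eq)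

lemma grid_cos_sum_le:
  fixes w :: "nat \<Rightarrow> real" and N :: nat
  assumes "2 \<le> N" "\<And>i. i < N \<Longrightarrow> 0 \<le> w i \<and> w i \<le> 1" "(\<Sum>i<N. w i) \<le> k" "k \<le> N / 2"
  shows "sin (pi / N) * (\<Sum>i<N. w i * cos (2 * pi * i / N - \<beta>)) \<le> sin (pi * k / N)"
proof -
  define h where "h = 2 * pi / N"
  \<comment> \<open>rotating the grid by m steps moves the phase into the window of the centred case\<close>
  define m where "m = \<lfloor>(\<beta> - pi * (k - 1) / N) / h\<rfloor>"
  define \<beta>' where "\<beta>' = \<beta> - m * h"
  define \<sigma> where "\<sigma> i = nat ((int i + m) mod int N)" for i
  have N: "0 < N" "h * N = 2 * pi" and "0 < h"
    using assms(1) by (auto simp: h_def)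
  have "m * h \<le> \<beta> - pi * (k - 1) / N" "\<beta> - pi * (k - 1) / N < (of_int m + 1) * h"
    using \<open>0 < h\<close> unfolding m_def by (simp_all add: floor_divide_lower floor_divide_upper)
  moreover have "pi * (k + 1) / N = pi * (k - 1) / N + h"
    using N(1) by (simp add: h_def field_simps)
  moreover have "pi * (k + 1) / N \<le> pi"
    using assms(1,4) by (simp add: divide_le_eq)
  ultimately have \<beta>': "pi * (k - 1) / N \<le> \<beta>'" "\<beta>' \<le> 2 * pi - pi * (k + 1) / N"
    by (auto simp: \<beta>'_def distrib_right)
  have cos_rotate: "cos (2 * pi * \<sigma> i / N - \<beta>) = cos (2 * pi * i / N - \<beta>')" for i
  proof -
    define d where "d = (int i + m) div int N"
    have "int (\<sigma> i) = (int i + m) mod int N"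
      using N(1) by (simp add: \<sigma>_def)
    also have "\<dots> = int i + m - int N * d"
      by (simp add: d_def minus_mult_div_eq_mod)
    finally have "int (\<sigma> i) = int i + m - int N * d" .
    then have \<sigma>_real: "real (\<sigma> i) = real i + of_int m - real N * of_int d"
      by (metis of_int_of_nat_eq of_int_add of_int_diff of_int_mult)
    have "2 * pi * \<sigma> i / N - \<beta> = (2 * pi * i / N - \<beta>') - 2 * pi * d"
      unfolding \<sigma>_real using N(1) by (simp add: \<beta>'_def h_def field_simps)
    then show ?thesis
      by (simp add: cos_diff cos_int_2pin sin_int_2pin)
  qed
  have "(\<Sum>i<N. w i * cos (2 * pi * i / N - \<beta>))
      = (\<Sum>i<N. w (\<sigma> i) * cos (2 * pi * \<sigma> i / N - \<beta>))"
    unfolding \<sigma>_def by (rule sum_lessThan_rotate[OF N(1), symmetric])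
  also have "\<dots> = (\<Sum>i<N. w (\<sigma> i) * cos (2 * pi * i / N - \<beta>'))"
    by (simp add: cos_rotate)
  finally have "sin (pi / N) * (\<Sum>i<N. w i * cos (2 * pi * i / N - \<beta>))
      = sin (pi / N) * (\<Sum>i<N. w (\<sigma> i) * cos (2 * pi * i / N - \<beta>'))" by simp
  also have "\<dots> \<le> sin (pi * k / N)"
  proof (rule grid_cos_sum_le_centred[OF N(1) _ _ assms(4) \<beta>'])
    show "0 \<le> w (\<sigma> i) \<and> w (\<sigma> i) \<le> 1" for i
      using assms(2) N(1) by (simp add: \<sigma>_def nat_less_iff)
    show "(\<Sum>i<N. w (\<sigma> i)) \<le> k"
      using assms(3) sum_lessThan_rotate[OF N(1), of w m] by (simp add: \<sigma>_def)
  qed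
  finally show ?thesis .
qed

lemma polar_form:
  fixes A B :: real
  obtains \<beta> where "A = sqrt (A\<^sup>2 + B\<^sup>2) * cos \<beta>" "B = sqrt (A\<^sup>2 + B\<^sup>2) * sin \<beta>"
proof
  let ?z = "Complex A B"
  have "cmod ?z = sqrt (A\<^sup>2 + B\<^sup>2)" by (simp add: cmod_def)
  then have "?z = rcis (sqrt (A\<^sup>2 + B\<^sup>2)) (Arg ?z)" by (metis rcis_cmod_Arg)
  then show "A = sqrt (A\<^sup>2 + B\<^sup>2) * cos (Arg ?z)" "B = sqrt (A\<^sup>2 + B\<^sup>2) * sin (Arg ?z)"
    by (metis Re_rcis complex.sel(1), metis Im_rcis complex.sel(2))
qed

lemma half_grid_signed_sum_le:
  fixes E t :: "nat \<Rightarrow> real" and n :: nat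
  assumes "1 \<le> n" "\<And>y. y < n \<Longrightarrow> \<bar>E y\<bar> \<le> t y \<and> t y \<le> 1"
  shows "sin (pi / (2 * real n)) * (\<Sum>y<n. E y * (A * cos (y * pi / n) + B * sin (y * pi / n)))
    \<le> sqrt (A\<^sup>2 + B\<^sup>2) * sin (pi / (2 * real n) * (\<Sum>y<n. t y))"
proof -
  define R where "R = sqrt (A\<^sup>2 + B\<^sup>2)"
  obtain \<beta> where AB: "A = R * cos \<beta>" "B = R * sin \<beta>"
    unfolding R_def by (rule polar_form)
  \<comment> \<open>negative parts of E move to the antipodal points of the 2n-grid, where the cosine flips sign\<close>
  define w where "w j = (if j < n then max (E j) 0 else max (- E (j - n)) 0)" for j
  have split: "(\<Sum>j<2 * n. f j) = (\<Sum>y<n. f y + f (n + y))" for f :: "nat \<Rightarrow> real"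
  proof -
    have "\<forall>m. (\<Sum>j<n + m. f j) = (\<Sum>y<n. f y) + (\<Sum>y<m. f (n + y))"
      by (intro allI, induct_tac m) (simp_all add: add.assoc)
    then show ?thesis by (simp add: mult_2 sum.distrib)
  qed
  have cos_shift: "cos (2 * pi * (n + y) / (2 * n) - \<beta>) = - cos (2 * pi * y / (2 * n) - \<beta>)" for y
  proof -
    have "2 * pi * (n + y) / (2 * n) - \<beta> = (2 * pi * y / (2 * n) - \<beta>) + pi"
      using assms(1) by (simp add: field_simps)
    then show ?thesis by (simp only: cos_periodic_pi)
  qed
  have "(\<Sum>y<n. E y * (A * cos (y * pi / n) + B * sin (y * pi / n)))
      = R * (\<Sum>y<n. E y * cos (2 * pi * y / (2 * n) - \<beta>))"
    by (simp add: AB cos_diff sum_distrib_left algebra_simps)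
  also have "(\<Sum>y<n. E y * cos (2 * pi * y / (2 * n) - \<beta>))
      = (\<Sum>j<2 * n. w j * cos (2 * pi * j / (2 * n) - \<beta>))"
    unfolding split cos_shift by (intro sum.cong) (auto simp: w_def max_def algebra_simps)
  finally have "sin (pi / (2 * n)) * (\<Sum>y<n. E y * (A * cos (y * pi / n) + B * sin (y * pi / n)))
      = R * (sin (pi / (2 * n)) * (\<Sum>j<2 * n. w j * cos (2 * pi * j / (2 * n) - \<beta>)))"
    by simp
  also have "\<dots> \<le> R * sin (pi * (\<Sum>y<n. t y) / (2 * n))"
  proof (intro mult_left_mono grid_cos_sum_le)
    show "0 \<le> w j \<and> w j \<le> 1" if "j < 2 * n" for j
    proof (cases "j < n")
      case True
      then show ?thesis using assms(2)[of j] by (auto simp: w_def abs_le_iff)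
    next
      case False
      then have "j - n < n" using that by linarith
      then show ?thesis using assms(2)[of "j - n"] False by (auto simp: w_def abs_le_iff)
    qed
    have "(\<Sum>j<2 * n. w j) = (\<Sum>y<n. \<bar>E y\<bar>)"
      unfolding split by (intro sum.cong) (auto simp: w_def)
    also have "\<dots> \<le> (\<Sum>y<n. t y)"
      using assms(2) by (intro sum_mono) auto
    finally show "(\<Sum>j<2 * n. w j) \<le> (\<Sum>y<n. t y)" .
    show "(\<Sum>y<n. t y) \<le> real (2 * n) / 2"
      using sum_mono[of "{..<n}" t "\<lambda>_. 1"] assms(2) by simp
  qed (use assms(1) in \<open>auto simp: R_def\<close>)
  finally show ?thesis by (simp add: R_def mult.commute)
qed

lemma concave_on_sin: "concave_on {0..pi} sin"
  unfolding concave_on_def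
  by (rule f''_ge0_imp_convex[where f' = "\<lambda>x. - cos x" and f'' = sin])
     (auto intro!: derivative_eq_intros sin_ge_zero)

lemma sum_weighted_sin_le:
  fixes w u :: "'l \<Rightarrow> real"
  assumes "finite L" "\<And>l. l \<in> L \<Longrightarrow> 0 \<le> w l" "(\<Sum>l\<in>L. w l) = 1"
    and "\<And>l. l \<in> L \<Longrightarrow> u l \<in> {0..pi}"
  shows "(\<Sum>l\<in>L. w l * sin (u l)) \<le> sin (\<Sum>l\<in>L. w l * u l)"
proof -
  have "L \<noteq> {}" using assms(3) by auto
  then have "- sin (\<Sum>l\<in>L. w l *\<^sub>R u l) \<le> (\<Sum>l\<in>L. w l * - sin (u l))"
    using concave_on_sin assms unfolding concave_on_def by (intro convex_on_sum) auto
  then show ?thesis by (simp add: sum_negf)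
qed

section \<open>Observables and states of a qubit\<close>

lemma sum_UNIV_2_zero_one: "(\<Sum>i\<in>(UNIV::2 set). f i) = f 0 + f 1"
proof -
  have "(2::2) = 0" by simp
  then show ?thesis using sum_2[of f] by (metis add.commute)
qed

lemma obsA_entries:
  "obsA \<alpha> x $ 0 $ 0 = of_real ((cos \<alpha> + (-1) ^ x * sin \<alpha>) / sqrt 2)"
  "obsA \<alpha> x $ 1 $ 1 = - of_real ((cos \<alpha> + (-1) ^ x * sin \<alpha>) / sqrt 2)"
  "obsA \<alpha> x $ 0 $ 1 = of_real ((cos \<alpha> - (-1) ^ x * sin \<alpha>) / sqrt 2)"
  "obsA \<alpha> x $ 1 $ 0 = of_real ((cos \<alpha> - (-1) ^ x * sin \<alpha>) / sqrt 2)"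
  by (simp_all add: obsA_def pauliZ_def pauliX_def vector_scaleR_component)
     (simp_all add: scaleR_conv_of_real field_simps)

lemma effA_entry:
  "effA \<alpha> a x $ i $ j = ((if i = j then 1 else 0) + (-1) ^ a * obsA \<alpha> x $ i $ j) / 2"
  unfolding effA_def mat_def by (simp add: scaleR_conv_of_real[of _ "_ :: complex"])

lemma Re_trace_obsA:
  "Re (trace (obsA \<alpha> x ** \<rho>)) =
     ((cos \<alpha> + (-1) ^ x * sin \<alpha>) * (Re (\<rho>$0$0) - Re (\<rho>$1$1))
      + (cos \<alpha> - (-1) ^ x * sin \<alpha>) * (Re (\<rho>$0$1) + Re (\<rho>$1$0))) / sqrt 2"
  by (simp add: trace_def matrix_matrix_mult_def sum_UNIV_2_zero_one obsA_entries)
     (simp add: algebra_simps add_divide_distrib diff_divide_distrib)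

lemma Re_trace_effA:
  "Re (trace (effA \<alpha> a x ** \<rho>))
    = (Re (trace \<rho>) + (-1) ^ a * Re (trace (obsA \<alpha> x ** \<rho>))) / 2"
  by (simp add: trace_def matrix_matrix_mult_def sum_UNIV_2_zero_one effA_entry obsA_entries)
     (simp add: algebra_simps add_divide_distrib diff_divide_distrib)

lemma Re_trace_2: "Re (trace (\<rho> :: complex^2^2)) = Re (\<rho>$0$0) + Re (\<rho>$1$1)"
  by (simp add: trace_def sum_UNIV_2_zero_one)

lemma quadratic_form_nonneg_imp_discrim_le:
  fixes A X D :: real
  assumes nonneg: "\<And>t s. 0 \<le> A * t\<^sup>2 + X * t * s + D * s\<^sup>2"
  shows "X\<^sup>2 \<le> 4 * A * D"
proof (cases "A = 0")
  case True
  have "X = 0"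
  proof (rule ccontr)
    assume "X \<noteq> 0"
    then show False
      using nonneg[of "- (D + 1) / X" 1] True by simp
  qed
  then show ?thesis
    using True by simp
next
  case False
  have "0 \<le> A * (4 * A * D - X\<^sup>2)"
    using nonneg[of "- X" "2 * A"] by (simp add: power2_eq_square algebra_simps)
  moreover have "0 < A"
    using nonneg[of 1 0] False by simp
  ultimately show ?thesis
    by (simp add: zero_le_mult_iff)
qed

lemma psd2_quadratic_form:
  assumes "psd2 \<rho>"
  shows "0 \<le> Re (\<rho>$0$0) * t\<^sup>2 + (Re (\<rho>$0$1) + Re (\<rho>$1$0)) * t * s + Re (\<rho>$1$1) * s\<^sup>2"
proof -
  define v :: "complex^2" where "v = (\<chi> i. if i = 0 then of_real t else of_real s)"
  have "0 \<le> Re (\<Sum>i\<in>UNIV. \<Sum>j\<in>UNIV. cnj (v$i) * \<rho>$i$j * v$j)"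
    using assms unfolding psd2_def Let_def by blast
  then show ?thesis
    by (simp add: sum_UNIV_2_zero_one v_def power2_eq_square algebra_simps)
qed

lemma psd2_Re_trace_nonneg:
  assumes "psd2 \<rho>"
  shows "0 \<le> Re (trace \<rho>)"
  using psd2_quadratic_form[OF assms, of 1 0] psd2_quadratic_form[OF assms, of 0 1]
  by (simp add: Re_trace_2)

lemma psd2_bloch_le:
  assumes "psd2 \<rho>"
  shows "(Re (\<rho>$0$0) - Re (\<rho>$1$1))\<^sup>2 + (Re (\<rho>$0$1) + Re (\<rho>$1$0))\<^sup>2 \<le> (Re (trace \<rho>))\<^sup>2"
  using quadratic_form_nonneg_imp_discrim_le[OF psd2_quadratic_form[OF assms]]
  by (simp add: Re_trace_2 power2_eq_square algebra_simps)

lemma gamma_fn_s_alpha: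
  assumes "0 \<le> \<alpha>" "\<alpha> \<le> pi / 2"
  shows "gamma_fn (s_alpha \<alpha>) = max (cos \<alpha>) (sin \<alpha>)"
proof -
  have "8 - (s_alpha \<alpha>)\<^sup>2 = (2 * (cos \<alpha> - sin \<alpha>))\<^sup>2"
    unfolding s_alpha_def using sin_cos_squared_add[of \<alpha>] by algebra
  then have "sqrt (8 - (s_alpha \<alpha>)\<^sup>2) = 2 * \<bar>cos \<alpha> - sin \<alpha>\<bar>"
    by (simp only: real_sqrt_abs abs_mult)
  then show ?thesis
    unfolding gamma_fn_def s_alpha_def by (simp add: max_def abs_if)
qed

lemma mixed_pair_norm_le:
  fixes u v z x :: real
  shows "sqrt ((u * z + v * x)\<^sup>2 + (v * z + u * x)\<^sup>2) \<le> (\<bar>u\<bar> + \<bar>v\<bar>) * sqrt (z\<^sup>2 + x\<^sup>2)"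
proof -
  have "Complex (u * z + v * x) (v * z + u * x) = u *\<^sub>R Complex z x + v *\<^sub>R Complex x z"
    by (simp add: complex_eq_iff)
  then have "cmod (Complex (u * z + v * x) (v * z + u * x))
      \<le> \<bar>u\<bar> * cmod (Complex z x) + \<bar>v\<bar> * cmod (Complex x z)"
    by (metis norm_scaleR norm_triangle_ineq)
  then show ?thesis
    by (simp add: cmod_def add.commute distrib_right)
qed

lemma obsA_expectations_le:
  assumes "0 \<le> \<alpha>" "\<alpha> \<le> pi / 2" "psd2 \<rho>"
  shows "sqrt ((Re (trace (obsA \<alpha> 0 ** \<rho>)))\<^sup>2 + (Re (trace (obsA \<alpha> 1 ** \<rho>)))\<^sup>2)
    \<le> sqrt 2 * gamma_fn (s_alpha \<alpha>) * Re (trace \<rho>)"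
proof -
  define c s where "c = cos \<alpha>" and "s = sin \<alpha>"
  define z x where "z = Re (\<rho>$0$0) - Re (\<rho>$1$1)" and "x = Re (\<rho>$0$1) + Re (\<rho>$1$0)"
  have "0 \<le> c" "0 \<le> s"
    using assms(1,2) by (auto simp: c_def s_def intro!: cos_ge_zero sin_ge_zero)
  then have "\<bar>(c + s) / sqrt 2\<bar> + \<bar>(c - s) / sqrt 2\<bar> = sqrt 2 * max c s"
    by (simp add: max_def abs_if field_simps)
  then have "sqrt ((Re (trace (obsA \<alpha> 0 ** \<rho>)))\<^sup>2 + (Re (trace (obsA \<alpha> 1 ** \<rho>)))\<^sup>2)
      \<le> sqrt 2 * max c s * sqrt (z\<^sup>2 + x\<^sup>2)"
    using mixed_pair_norm_le[of "(c + s) / sqrt 2" z "(c - s) / sqrt 2" x]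
    by (simp add: Re_trace_obsA c_def s_def z_def x_def add_divide_distrib diff_divide_distrib algebra_simps)
  also have "\<dots> \<le> sqrt 2 * max c s * Re (trace \<rho>)"
    using psd2_bloch_le[OF assms(3)] psd2_Re_trace_nonneg[OF assms(3)] \<open>0 \<le> c\<close>
    by (intro mult_left_mono) (auto simp: z_def x_def real_le_lsqrt)
  finally show ?thesis
    using gamma_fn_s_alpha[OF assms(1,2)] by (simp add: c_def s_def)
qed

section \<open>Local hidden-state models\<close>

lemma Wn_of_hidden_states:
  fixes w :: "'l \<Rightarrow> real" and e :: "nat \<Rightarrow> 'l \<Rightarrow> real" and q :: "'l \<Rightarrow> nat \<Rightarrow> nat \<Rightarrow> real"
  assumes "\<And>a b x y. a \<in> {0,1} \<Longrightarrow> b \<in> {0,1} \<Longrightarrow> x \<in> {0,1} \<Longrightarrow> y < n \<Longrightarrow>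
      p a b x y = (\<Sum>l\<in>\<Lambda>. (w l + (-1) ^ a * e x l) / 2 * q l y b)"
  shows "real n * Wn n p = (\<Sum>l\<in>\<Lambda>. \<Sum>y<n. (q l y 0 - q l y 1)
      * (e 0 l * cos (y * pi / n) + e 1 l * sin (y * pi / n)))"
proof (cases "n = 0")
  case False
  have "real n * Wn n p = (\<Sum>y<n. \<Sum>a\<in>{0,1::nat}. \<Sum>b\<in>{0,1::nat}.
      (-1) ^ (a + b) * (cos (y * pi / n) * p a b 0 y + sin (y * pi / n) * p a b 1 y))"
    using False by (simp add: Wn_def)
  also have "\<dots> = (\<Sum>y<n. \<Sum>l\<in>\<Lambda>. \<Sum>a\<in>{0,1::nat}. \<Sum>b\<in>{0,1::nat}.
      (-1) ^ (a + b) * (cos (y * pi / n) * ((w l + (-1) ^ a * e 0 l) / 2 * q l y b)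
        + sin (y * pi / n) * ((w l + (-1) ^ a * e 1 l) / 2 * q l y b)))"
    using assms by (intro sum.cong refl) (simp add: sum_distrib_left sum.distrib[symmetric])
  also have "\<dots> = (\<Sum>y<n. \<Sum>l\<in>\<Lambda>. (q l y 0 - q l y 1)
      * (e 0 l * cos (y * pi / n) + e 1 l * sin (y * pi / n)))"
    by (intro sum.cong refl) (simp add: field_simps)
  finally show ?thesis by (subst sum.swap)
qed (simp add: Wn_def)

lemma Tn_of_hidden_states:
  fixes w :: "'l \<Rightarrow> real" and e :: "nat \<Rightarrow> 'l \<Rightarrow> real" and q :: "'l \<Rightarrow> nat \<Rightarrow> nat \<Rightarrow> real"
  assumes "\<And>a b y. a \<in> {0,1} \<Longrightarrow> b \<in> {0,1} \<Longrightarrow> y < n \<Longrightarrow>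
      p a b 0 y = (\<Sum>l\<in>\<Lambda>. (w l + (-1) ^ a * e 0 l) / 2 * q l y b)"
  shows "real n * Tn n p = (\<Sum>l\<in>\<Lambda>. w l * (\<Sum>y<n. q l y 0 + q l y 1))"
proof (cases "n = 0")
  case False
  have "real n * Tn n p = (\<Sum>y<n. \<Sum>b\<in>{0,1::nat}. \<Sum>a\<in>{0,1::nat}. p a b 0 y)"
    using False by (simp add: Tn_def)
  also have "\<dots> = (\<Sum>y<n. \<Sum>l\<in>\<Lambda>. \<Sum>b\<in>{0,1::nat}. \<Sum>a\<in>{0,1::nat}.
      (w l + (-1) ^ a * e 0 l) / 2 * q l y b)"
    using assms by (intro sum.cong refl) (simp add: sum.distrib[symmetric])
  also have "\<dots> = (\<Sum>y<n. \<Sum>l\<in>\<Lambda>. w l * (q l y 0 + q l y 1))"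
    by (intro sum.cong refl) (simp add: field_simps)
  also have "\<dots> = (\<Sum>l\<in>\<Lambda>. w l * (\<Sum>y<n. q l y 0 + q l y 1))"
    unfolding sum_distrib_left by (rule sum.swap)
  finally show ?thesis .
qed (simp add: Tn_def)

lemma hidden_state_average_le:
  fixes w :: "'l \<Rightarrow> real" and e :: "nat \<Rightarrow> 'l \<Rightarrow> real" and q :: "'l \<Rightarrow> nat \<Rightarrow> nat \<Rightarrow> real"
  assumes "finite \<Lambda>" "1 \<le> n" "0 \<le> c"
    and w: "\<And>l. l \<in> \<Lambda> \<Longrightarrow> 0 \<le> w l" "(\<Sum>l\<in>\<Lambda>. w l) = 1"
    and e: "\<And>l. l \<in> \<Lambda> \<Longrightarrow> sqrt ((e 0 l)\<^sup>2 + (e 1 l)\<^sup>2) \<le> c * w l"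
    and q: "\<And>l y. l \<in> \<Lambda> \<Longrightarrow> y < n \<Longrightarrow> 0 \<le> q l y 0 \<and> 0 \<le> q l y 1 \<and> q l y 0 + q l y 1 \<le> 1"
  shows "sin (pi / (2 * real n)) * (\<Sum>l\<in>\<Lambda>. \<Sum>y<n. (q l y 0 - q l y 1)
      * (e 0 l * cos (y * pi / n) + e 1 l * sin (y * pi / n)))
    \<le> c * sin (pi / 2 * ((\<Sum>l\<in>\<Lambda>. w l * (\<Sum>y<n. q l y 0 + q l y 1)) / n))"
proof -
  define K where "K l = (\<Sum>y<n. q l y 0 + q l y 1)" for l
  define u where "u l = pi / 2 * (K l / n)" for l
  have u: "0 \<le> u l \<and> u l \<le> pi" if "l \<in> \<Lambda>" for l
  proof -
    have "0 \<le> K l" "K l \<le> n"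
      using q[OF that] sum_mono[of "{..<n}" "\<lambda>y. q l y 0 + q l y 1" "\<lambda>_. 1"] unfolding K_def
      by (auto intro!: sum_nonneg simp: add_nonneg_nonneg)
    then show ?thesis
      using assms(2) by (auto simp: u_def field_simps)
  qed
  have "sin (pi / (2 * real n)) * (\<Sum>l\<in>\<Lambda>. \<Sum>y<n. (q l y 0 - q l y 1)
      * (e 0 l * cos (y * pi / n) + e 1 l * sin (y * pi / n)))
    = (\<Sum>l\<in>\<Lambda>. sin (pi / (2 * real n)) * (\<Sum>y<n. (q l y 0 - q l y 1)
      * (e 0 l * cos (y * pi / n) + e 1 l * sin (y * pi / n))))"
    by (rule sum_distrib_left)
  also have "\<dots> \<le> (\<Sum>l\<in>\<Lambda>. sqrt ((e 0 l)\<^sup>2 + (e 1 l)\<^sup>2) * sin (u l))"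
  proof (rule sum_mono)
    fix l assume "l \<in> \<Lambda>"
    have "pi / (2 * real n) * K l = u l" by (simp add: u_def)
    then show "sin (pi / (2 * real n)) * (\<Sum>y<n. (q l y 0 - q l y 1)
        * (e 0 l * cos (y * pi / n) + e 1 l * sin (y * pi / n)))
      \<le> sqrt ((e 0 l)\<^sup>2 + (e 1 l)\<^sup>2) * sin (u l)"
      using half_grid_signed_sum_le[OF assms(2), of "\<lambda>y. q l y 0 - q l y 1" "\<lambda>y. q l y 0 + q l y 1"]
        q[OF \<open>l \<in> \<Lambda>\<close>] by (fastforce simp: K_def abs_le_iff)
  qed
  also have "\<dots> \<le> (\<Sum>l\<in>\<Lambda>. c * (w l * sin (u l)))"
  proof (rule sum_mono)
    fix l assume "l \<in> \<Lambda>"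
    then have "sqrt ((e 0 l)\<^sup>2 + (e 1 l)\<^sup>2) * sin (u l) \<le> c * w l * sin (u l)"
      using e u by (intro mult_right_mono sin_ge_zero) auto
    then show "sqrt ((e 0 l)\<^sup>2 + (e 1 l)\<^sup>2) * sin (u l) \<le> c * (w l * sin (u l))"
      by (simp add: mult.assoc)
  qed
  also have "\<dots> \<le> c * sin (\<Sum>l\<in>\<Lambda>. w l * u l)"
    unfolding sum_distrib_left[symmetric]
    using assms(1,3) w u by (intro mult_left_mono sum_weighted_sin_le) auto
  also have "(\<Sum>l\<in>\<Lambda>. w l * u l) = pi / 2 * ((\<Sum>l\<in>\<Lambda>. w l * K l) / n)"
    by (simp add: u_def sum_distrib_left sum_divide_distrib mult_ac)
  finally show ?thesis
    by (simp add: K_def)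
qed

lemma lhs_model_behaviour:
  fixes \<rho> :: "'l \<Rightarrow> complex^2^2"
  assumes "\<forall>a\<in>{0,1}. \<forall>b\<in>{0,1,2}. \<forall>x\<in>{0,1}. \<forall>y<n.
      complex_of_real (p a b x y) = (\<Sum>l\<in>\<Lambda>. trace (effA \<alpha> a x ** \<rho> l) * complex_of_real (q l y b))"
    and "a \<in> {0,1}" "b \<in> {0,1}" "x \<in> {0,1}" "y < n"
  shows "p a b x y
    = (\<Sum>l\<in>\<Lambda>. (Re (trace (\<rho> l)) + (-1) ^ a * Re (trace (obsA \<alpha> x ** \<rho> l))) / 2 * q l y b)"
proof -
  have "complex_of_real (p a b x y)
      = (\<Sum>l\<in>\<Lambda>. trace (effA \<alpha> a x ** \<rho> l) * complex_of_real (q l y b))"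
    using assms by blast
  then have "p a b x y = Re (\<Sum>l\<in>\<Lambda>. trace (effA \<alpha> a x ** \<rho> l) * complex_of_real (q l y b))"
    by (metis Re_complex_of_real)
  then show ?thesis
    by (simp add: Re_sum Re_trace_effA)
qed

lemma click_probabilities_le_one:
  fixes r :: "nat \<Rightarrow> real"
  assumes "(\<forall>b\<in>{0,1,2}. 0 \<le> r b) \<and> (\<Sum>b\<in>{0,1,2::nat}. r b) = 1"
  shows "0 \<le> r 0 \<and> 0 \<le> r 1 \<and> r 0 + r 1 \<le> 1"
proof -
  have "0 \<le> r 2" "r 0 + r 1 + r 2 = 1" "0 \<le> r 0" "0 \<le> r 1"
    using assms by (auto simp: add.assoc)
  then show ?thesis by linarith
qed

theorem mainTheorem6:
  fixes n :: nat and \<alpha> :: real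
    and p :: "nat \<Rightarrow> nat \<Rightarrow> nat \<Rightarrow> nat \<Rightarrow> real"
    and \<Lambda> :: "'l set" and \<rho> :: "'l \<Rightarrow> complex^2^2"
    and q :: "'l \<Rightarrow> nat \<Rightarrow> nat \<Rightarrow> real"
  assumes "n \<ge> 1"
    and "0 \<le> \<alpha>" and "\<alpha> \<le> pi / 2"
    and "finite \<Lambda>"
    and "\<forall>l\<in>\<Lambda>. psd2 (\<rho> l)"
    and "(\<Sum>l\<in>\<Lambda>. trace (\<rho> l)) = 1"
    and "\<forall>l\<in>\<Lambda>. \<forall>y<n. (\<forall>b\<in>{0,1,2}. 0 \<le> q l y b) \<and> (\<Sum>b\<in>{0,1,2::nat}. q l y b) = 1"
    and "\<forall>a\<in>{0,1}. \<forall>b\<in>{0,1,2}. \<forall>x\<in>{0,1}. \<forall>y<n.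
           complex_of_real (p a b x y) = (\<Sum>l\<in>\<Lambda>. trace (effA \<alpha> a x ** \<rho> l) * complex_of_real (q l y b))"
  shows "real n * sin (pi / (2 * real n)) * Wn n p
           \<le> sqrt 2 * sin (pi / 2 * Tn n p) * gamma_fn (s_alpha \<alpha>)"
proof -
  define w where "w l = Re (trace (\<rho> l))" for l
  define e where "e x l = Re (trace (obsA \<alpha> x ** \<rho> l))" for x l
  define c where "c = sqrt 2 * gamma_fn (s_alpha \<alpha>)"
  have p: "p a b x y = (\<Sum>l\<in>\<Lambda>. (w l + (-1) ^ a * e x l) / 2 * q l y b)"
    if "a \<in> {0,1}" "b \<in> {0,1}" "x \<in> {0,1}" "y < n" for a b x y
    unfolding w_def e_def using assms(8) that by (rule lhs_model_behaviour)
  have "real n * Wn n p = (\<Sum>l\<in>\<Lambda>. \<Sum>y<n.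
      (q l y 0 - q l y 1) * (e 0 l * cos (y * pi / n) + e 1 l * sin (y * pi / n)))"
    by (rule Wn_of_hidden_states) (rule p)
  then have "real n * sin (pi / (2 * real n)) * Wn n p = sin (pi / (2 * real n)) * (\<Sum>l\<in>\<Lambda>.
      \<Sum>y<n. (q l y 0 - q l y 1) * (e 0 l * cos (y * pi / n) + e 1 l * sin (y * pi / n)))"
    by (metis mult.assoc mult.commute)
  also have "\<dots> \<le> c * sin (pi / 2 * ((\<Sum>l\<in>\<Lambda>. w l * (\<Sum>y<n. q l y 0 + q l y 1)) / n))"
  proof (rule hidden_state_average_le[OF assms(4,1)])
    show "0 \<le> c"
      using gamma_fn_s_alpha[OF assms(2,3)] cos_ge_zero[of \<alpha>] assms(2,3)
      by (simp add: c_def le_max_iff_disj)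
    show "0 \<le> w l" "sqrt ((e 0 l)\<^sup>2 + (e 1 l)\<^sup>2) \<le> c * w l" if "l \<in> \<Lambda>" for l
      using that assms(2,3,5) psd2_Re_trace_nonneg obsA_expectations_le
      by (simp_all add: w_def e_def c_def)
    show "(\<Sum>l\<in>\<Lambda>. w l) = 1"
      using assms(6) by (simp add: w_def flip: Re_sum)
    show "0 \<le> q l y 0 \<and> 0 \<le> q l y 1 \<and> q l y 0 + q l y 1 \<le> 1" if "l \<in> \<Lambda>" "y < n" for l y
      using assms(7) that by (intro click_probabilities_le_one) blast
  qed
  also have "(\<Sum>l\<in>\<Lambda>. w l * (\<Sum>y<n. q l y 0 + q l y 1)) / n = Tn n p"
  proof -
    have "real n * Tn n p = (\<Sum>l\<in>\<Lambda>. w l * (\<Sum>y<n. q l y 0 + q l y 1))"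
      by (rule Tn_of_hidden_states) (rule p, auto)
    then show ?thesis
      using assms(1) by (simp add: field_simps)
  qed
  finally show ?thesis
    by (simp add: c_def mult_ac)
qed

end
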